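(* Let $K\subseteq\mathbb R^2$ be a compact set containing no array on three points, let $f\in C(K)$, $\varepsilon>0$, and let $\delta>0$ be such that $|x_1-x_2|<2\delta$ implies $|f(x_1)-f(x_2)|<\varepsilon$ for all $x_1,x_2\in K$. There exists $n_0\in\mathbb N$ such that for every $n\ge n_0$ (and every choice of $f^n$ as in the context) there is a function $g^n:V(\Gamma^n)\to\mathbb R$ with the following properties: (1a) if $u_1u_2$ is an edge of $\Gamma^n_{\mathrm{short}}$ then $|g^n(u_1)-g^n(u_2)|\le\varepsilon$; (1b) if $u_1u_2$ is an edge of $\Gamma^n_{\mathrm{hor}}$ then $|f^n(u_1)-g^n(u_1)|\le\varepsilon$ and $|f^n(u_2)-g^n(u_2)|\le\varepsilon$; (1c) if $u_1u_2$ is an edge of $\Gamma^n_{\mathrm{vert}}$ then $g^n(u_1)=g^n(u_2)=0$; (2) $\max_{u\in V(\Gamma^n)}|g^n(u)|\le\max_{u\in V(\Gamma^n)}|f^n(u)|$.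
   Context: An array on three points is a triple $a_1,a_2,a_3$ of points in the plane with $a_1\ne a_2$, $a_2\ne a_3$, such that the segments $[a_1;a_2]$ and $[a_2;a_3]$ are each parallel to a coordinate axis and are mutually orthogonal. Let $p(x,y)=x$, $q(x,y)=y$; $|\cdot|$ on $\mathbb R^2$ is the Euclidean norm. For $n\in\mathbb N$ the graph $\Gamma^n$ has vertex set all lattice points $u=(i/2^n,j/2^n)$, $i,j\in\mathbb Z$, such that the square $S_u=[i/2^n;(i+1)/2^n)\times[j/2^n;(j+1)/2^n)$ meets $K$, and edges all two-element sets $\{u_1,u_2\}$ of vertices with $|p(u_1)-p(u_2)|\le 1/2^n$ or $|q(u_1)-q(u_2)|\le 1/2^n$. An edge $u_1u_2$ is vertical if $|p(u_1)-p(u_2)|\le1/2^n$, horizontal if $|q(u_1)-q(u_2)|\le1/2^n$, long if $|u_1-u_2|\ge\delta$, short if $|u_1-u_2|<\delta$. $\Gamma^n_{\mathrm{short}}$, $\Gamma^n_{\mathrm{hor}}$, $\Gamma^n_{\mathrm{vert}}$ are the subgraphs formed by all short edges, all long horizontal edges, and all long vertical edges respectively (with their endpoints). The function $f^n:V(\Gamma^n)\to\mathbb R$ is defined by fixing for each vertex $u$ a point $x_u\in K\cap S_u$ and setting $f^n(u)=f(x_u)$. *)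

theory Defs
  imports "HOL-Analysis.Analysis"
begin

text \<open>Points of the plane are modelled as \<open>real \<times> real\<close>; the product norm
  on this type is the Euclidean norm.  \<open>fst\<close> is the projection p, \<open>snd\<close> is q.\<close>

definition is_array :: "(real \<times> real) \<Rightarrow> (real \<times> real) \<Rightarrow> (real \<times> real) \<Rightarrow> bool" where
  "is_array a1 a2 a3 \<longleftrightarrow> a1 \<noteq> a2 \<and> a2 \<noteq> a3 \<and>
     ((snd a1 = snd a2 \<and> fst a2 = fst a3) \<or> (fst a1 = fst a2 \<and> snd a2 = snd a3))"

definition no_array :: "(real \<times> real) set \<Rightarrow> bool" where
  "no_array K \<longleftrightarrow> \<not> (\<exists>a1\<in>K. \<exists>a2\<in>K. \<exists>a3\<in>K. is_array a1 a2 a3)"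

definition sq :: "nat \<Rightarrow> real \<times> real \<Rightarrow> (real \<times> real) set" where
  "sq n u = {x. fst u \<le> fst x \<and> fst x < fst u + 1 / 2 ^ n \<and>
                snd u \<le> snd x \<and> snd x < snd u + 1 / 2 ^ n}"

definition verts :: "nat \<Rightarrow> (real \<times> real) set \<Rightarrow> (real \<times> real) set" where
  "verts n K = {u. (\<exists>i j :: int. u = (of_int i / 2 ^ n, of_int j / 2 ^ n)) \<and> sq n u \<inter> K \<noteq> {}}"

definition edge :: "nat \<Rightarrow> (real \<times> real) set \<Rightarrow> real \<times> real \<Rightarrow> real \<times> real \<Rightarrow> bool" where
  "edge n K u1 u2 \<longleftrightarrow> u1 \<in> verts n K \<and> u2 \<in> verts n K \<and> u1 \<noteq> u2 \<and>
     (\<bar>fst u1 - fst u2\<bar> \<le> 1 / 2 ^ n \<or> \<bar>snd u1 - snd u2\<bar> \<le> 1 / 2 ^ n)"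

definition vertical_edge where
  "vertical_edge n K u1 u2 \<longleftrightarrow> edge n K u1 u2 \<and> \<bar>fst u1 - fst u2\<bar> \<le> 1 / 2 ^ n"

definition horizontal_edge where
  "horizontal_edge n K u1 u2 \<longleftrightarrow> edge n K u1 u2 \<and> \<bar>snd u1 - snd u2\<bar> \<le> 1 / 2 ^ n"

definition short_edge :: "nat \<Rightarrow> (real \<times> real) set \<Rightarrow> real \<Rightarrow> real \<times> real \<Rightarrow> real \<times> real \<Rightarrow> bool" where
  "short_edge n K \<delta> u1 u2 \<longleftrightarrow> edge n K u1 u2 \<and> norm (u1 - u2) < \<delta>"

definition long_hor_edge :: "nat \<Rightarrow> (real \<times> real) set \<Rightarrow> real \<Rightarrow> real \<times> real \<Rightarrow> real \<times> real \<Rightarrow> bool" where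
  "long_hor_edge n K \<delta> u1 u2 \<longleftrightarrow> horizontal_edge n K u1 u2 \<and> norm (u1 - u2) \<ge> \<delta>"

definition long_vert_edge :: "nat \<Rightarrow> (real \<times> real) set \<Rightarrow> real \<Rightarrow> real \<times> real \<Rightarrow> real \<times> real \<Rightarrow> bool" where
  "long_vert_edge n K \<delta> u1 u2 \<longleftrightarrow> vertical_edge n K u1 u2 \<and> norm (u1 - u2) \<ge> \<delta>"

end

theory Submission
  imports Defs
begin

text \<open>Rank each vertex of \<open>\<Gamma>\<^sup>n\<close> by its distance, along short edges, from the endpoints of
  long vertical edges, truncated at some \<open>L \<ge> max |f| / \<epsilon>\<close>, and let \<open>g\<^sup>n\<close> be \<open>f\<^sup>n\<close> clipped
  to \<open>[-\<epsilon> rank, \<epsilon> rank]\<close>. Along a short edge the rank changes by at most one and \<open>f\<^sup>n\<close> by at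
  most \<open>\<epsilon>\<close>, ends of long vertical edges have rank 0, and clipping never increases \<open>|f\<^sup>n|\<close>.
  It remains to see that, for large \<open>n\<close>, ends of long horizontal edges have rank \<open>L\<close>, i.e.
  that no path of at most \<open>L + 1\<close> edges leads from a long vertical to a long horizontal edge.
  Otherwise, by compactness, such paths converge to a chain of points of \<open>K\<close> in which
  consecutive points share a coordinate, starting with a nontrivial vertical and ending with
  a nontrivial horizontal step. But in a set without arrays, having a distinct point of \<open>K\<close>
  on the same vertical line propagates along such a chain, and such a point cannot also
  have a distinct neighbour on its horizontal line.\<close>

section \<open>Arrays and staircases\<close>

definition aligned :: "real \<times> real \<Rightarrow> real \<times> real \<Rightarrow> bool" where
  "aligned a b \<longleftrightarrow> fst a = fst b \<or> snd a = snd b"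

lemma no_array_vertical_neighbour_aligned:
  assumes "no_array K" "a \<in> K" "b \<in> K" "c \<in> K" "c \<noteq> a" "fst c = fst a" "aligned a b"
  shows "\<exists>d\<in>K. d \<noteq> b \<and> fst d = fst b"
proof (cases "a = b")
  case True
  with assms show ?thesis by blast
next
  case False
  have "\<not> is_array b a c"
    using assms unfolding no_array_def by blast
  with False assms have "snd a \<noteq> snd b"
    by (auto simp: is_array_def)
  with False assms show ?thesis
    by (auto simp: aligned_def)
qed

lemma no_array_no_staircase:
  assumes "no_array K" and K: "\<forall>i\<le>Suc m. a i \<in> K"
    and aligned: "\<forall>i\<le>m. aligned (a i) (a (Suc i))"
    and first: "a 0 \<noteq> a 1" "fst (a 0) = fst (a 1)"
    and last: "a m \<noteq> a (Suc m)" "snd (a m) = snd (a (Suc m))"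
  shows False
proof -
  have "\<exists>c\<in>K. c \<noteq> a i \<and> fst c = fst (a i)" if "i \<le> m" for i
    using that
  proof (induction i)
    case 0
    have "a 1 \<in> K" using K by simp
    with first show ?case by (intro bexI[of _ "a 1"]) simp_all
  next
    case (Suc i)
    then obtain c where c: "c \<in> K" "c \<noteq> a i" "fst c = fst (a i)" by auto
    have "a i \<in> K" "a (Suc i) \<in> K" "aligned (a i) (a (Suc i))"
      using Suc.prems K aligned by simp_all
    from no_array_vertical_neighbour_aligned[OF \<open>no_array K\<close> this(1,2) c this(3)]
    show ?case .
  qed
  then obtain c where "c \<in> K" "c \<noteq> a m" "fst c = fst (a m)" by blast
  with last have "is_array (a (Suc m)) (a m) c"
    by (auto simp: is_array_def)
  moreover have "a m \<in> K" "a (Suc m) \<in> K" using K by simp_all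
  ultimately show False
    using \<open>no_array K\<close> \<open>c \<in> K\<close> unfolding no_array_def by blast
qed

lemma sq_coord_dist:
  assumes "y \<in> sq n u"
  shows "\<bar>fst y - fst u\<bar> \<le> 1 / 2 ^ n" "\<bar>snd y - snd u\<bar> \<le> 1 / 2 ^ n"
  using assms by (auto simp: sq_def)

lemma norm_le_abs_fst_plus_abs_snd: "norm (p :: real \<times> real) \<le> \<bar>fst p\<bar> + \<bar>snd p\<bar>"
  by (cases p) (simp add: norm_Pair sqrt_sum_squares_le_sum_abs)

lemma sq_dist: "y \<in> sq n u \<Longrightarrow> dist y u \<le> 2 / 2 ^ n"
  using norm_le_abs_fst_plus_abs_snd[of "y - u"] sq_coord_dist[of y n u]
  by (simp add: dist_norm)

lemma sq_points_close:
  assumes "y \<in> sq n u" "z \<in> sq n v"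
  shows "\<bar>fst y - fst z\<bar> \<le> \<bar>fst u - fst v\<bar> + 2 / 2 ^ n"
    and "\<bar>snd y - snd z\<bar> \<le> \<bar>snd u - snd v\<bar> + 2 / 2 ^ n"
    and "norm (y - z) \<le> norm (u - v) + 4 / 2 ^ n"
    and "norm (u - v) \<le> norm (y - z) + 4 / 2 ^ n"
proof -
  note coord = sq_coord_dist[OF assms(1)] sq_coord_dist[OF assms(2)]
  show "\<bar>fst y - fst z\<bar> \<le> \<bar>fst u - fst v\<bar> + 2 / 2 ^ n"
       "\<bar>snd y - snd z\<bar> \<le> \<bar>snd u - snd v\<bar> + 2 / 2 ^ n"
    using coord by linarith+
  have "dist y u \<le> 2 / 2 ^ n" "dist z v \<le> 2 / 2 ^ n"
    using sq_dist assms by auto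
  moreover have "dist y z \<le> dist y u + dist u z" "dist u z \<le> dist u v + dist v z"
    "dist u v \<le> dist u y + dist y v" "dist y v \<le> dist y z + dist z v"
    by (rule dist_triangle)+
  moreover have "dist v z = dist z v" "dist u y = dist y u"
    by (rule dist_commute)+
  ultimately have "dist y z \<le> dist u v + 4 / 2 ^ n" "dist u v \<le> dist y z + 4 / 2 ^ n"
    by linarith+
  then show "norm (y - z) \<le> norm (u - v) + 4 / 2 ^ n" "norm (u - v) \<le> norm (y - z) + 4 / 2 ^ n"
    by (simp_all add: dist_norm)
qed

lemma finite_verts:
  assumes "bounded K"
  shows "finite (verts n K)"
proof -
  obtain R where R: "\<And>y. y \<in> K \<Longrightarrow> norm y \<le> R"
    using assms bounded_iff by metis
  define B where "B = \<lceil>(R + 1) * 2 ^ n\<rceil>"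
  define grid where "grid = (\<lambda>(i, j). (real_of_int i / 2 ^ n, real_of_int j / 2 ^ n :: real))"
  have bound: "i \<in> {-B..B}" if "\<bar>real_of_int i / 2 ^ n\<bar> \<le> R + 1" for i :: int
  proof -
    have "\<bar>real_of_int i\<bar> \<le> (R + 1) * 2 ^ n"
      using that by (simp add: abs_divide divide_le_eq)
    also have "\<dots> \<le> real_of_int B"
      unfolding B_def by (rule le_of_int_ceiling)
    finally have "\<bar>i\<bar> \<le> B"
      by (metis of_int_abs of_int_le_iff)
    then show ?thesis by auto
  qed
  have "verts n K \<subseteq> grid ` ({-B..B} \<times> {-B..B})"
  proof
    fix u assume "u \<in> verts n K"
    then obtain i j y where u: "u = grid (i, j)" and y: "y \<in> sq n u" "y \<in> K"
      unfolding verts_def grid_def by auto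
    have "\<bar>fst y\<bar> \<le> R" "\<bar>snd y\<bar> \<le> R"
      using R[OF y(2)] norm_fst_le[of "fst y" "snd y"] norm_snd_le[of "snd y" "fst y"] by simp_all
    moreover have "1 / 2 ^ n \<le> (1::real)" by simp
    ultimately have "\<bar>fst u\<bar> \<le> R + 1" "\<bar>snd u\<bar> \<le> R + 1"
      using sq_coord_dist[OF y(1)] by linarith+
    then have "(i, j) \<in> {-B..B} \<times> {-B..B}"
      using bound u unfolding grid_def by simp
    with u show "u \<in> grid ` ({-B..B} \<times> {-B..B})" by blast
  qed
  then show ?thesis
    by (rule finite_subset) simp
qed

section \<open>Paths from long vertical to long horizontal edges\<close>

lemma compact_common_convergent_subseq:
  fixes s :: "nat \<Rightarrow> 'i \<Rightarrow> 'a::metric_space"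
  assumes "compact K" "finite I" "\<And>j i. i \<in> I \<Longrightarrow> s j i \<in> K"
  shows "\<exists>r l. strict_mono r \<and> (\<forall>i\<in>I. l i \<in> K \<and> (\<lambda>j. s (r j) i) \<longlonglongrightarrow> l i)"
  using assms(2,3)
proof (induction I rule: finite_induct)
  case empty
  show ?case using strict_mono_id by blast
next
  case (insert i0 I)
  then obtain r l where r: "strict_mono r" "\<forall>i\<in>I. l i \<in> K \<and> (\<lambda>j. s (r j) i) \<longlonglongrightarrow> l i"
    by blast
  obtain l0 r0 where l0: "l0 \<in> K" "strict_mono r0" "((\<lambda>j. s (r j) i0) \<circ> r0) \<longlonglongrightarrow> l0"
    using seq_compactE[OF compact_imp_seq_compact[OF assms(1)], of "\<lambda>j. s (r j) i0"] insert.prems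
    by blast
  have "(\<lambda>j. s (r (r0 j)) i) \<longlonglongrightarrow> l i" if "i \<in> I" for i
    using LIMSEQ_subseq_LIMSEQ[OF _ l0(2)] r(2) that by (auto simp: o_def)
  with r(2) l0(1,3) have "\<forall>i\<in>insert i0 I. (l(i0 := l0)) i \<in> K \<and> (\<lambda>j. s ((r \<circ> r0) j) i) \<longlonglongrightarrow> (l(i0 := l0)) i"
    by (auto simp: o_def)
  moreover have "strict_mono (r \<circ> r0)"
    using r(1) l0(2) by (rule strict_mono_o)
  ultimately show ?case by blast
qed

lemma LIMSEQ_le_dyadic:
  fixes X :: "nat \<Rightarrow> real"
  assumes "X \<longlonglongrightarrow> l" "\<And>j. X j \<le> c / 2 ^ j"
  shows "l \<le> 0"
  using LIMSEQ_le[OF assms(1) LIMSEQ_divide_realpow_zero[of 2 c]] assms(2) by auto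

lemma sq_pair_limit:
  fixes u v y z :: "nat \<Rightarrow> real \<times> real" and N :: "nat \<Rightarrow> nat"
  assumes lim: "y \<longlonglongrightarrow> a" "z \<longlonglongrightarrow> b"
    and N: "\<And>j. j \<le> N j" and sq: "\<And>j. y j \<in> sq (N j) (u j)" "\<And>j. z j \<in> sq (N j) (v j)"
  shows "(\<And>j. edge (N j) K (u j) (v j)) \<Longrightarrow> aligned a b"
    and "(\<And>j. vertical_edge (N j) K (u j) (v j)) \<Longrightarrow> fst a = fst b"
    and "(\<And>j. horizontal_edge (N j) K (u j) (v j)) \<Longrightarrow> snd a = snd b"
    and "0 < \<delta> \<Longrightarrow> (\<And>j. \<delta> \<le> norm (u j - v j)) \<Longrightarrow> a \<noteq> b"
proof -
  have scale: "c / 2 ^ N j \<le> c / 2 ^ j" if "0 \<le> c" for c :: real and j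
    using that N[of j] by (intro divide_left_mono) (auto intro: power_increasing)
  note close = sq_points_close[OF sq(1) sq(2)]
  show "aligned a b" if "\<And>j. edge (N j) K (u j) (v j)"
  proof -
    have "min \<bar>fst (y j) - fst (z j)\<bar> \<bar>snd (y j) - snd (z j)\<bar> \<le> 3 / 2 ^ j" for j
      using that[of j] close(1,2)[of j] scale[of 3 j] by (auto simp: edge_def)
    moreover have "(\<lambda>j. min \<bar>fst (y j) - fst (z j)\<bar> \<bar>snd (y j) - snd (z j)\<bar>)
        \<longlonglongrightarrow> min \<bar>fst a - fst b\<bar> \<bar>snd a - snd b\<bar>"
      using lim by (intro tendsto_intros)
    ultimately have "min \<bar>fst a - fst b\<bar> \<bar>snd a - snd b\<bar> \<le> 0"
      by (rule LIMSEQ_le_dyadic[rotated])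
    then show ?thesis by (auto simp: aligned_def min_def split: if_splits)
  qed
  show "fst a = fst b" if "\<And>j. vertical_edge (N j) K (u j) (v j)"
  proof -
    have "\<bar>fst (y j) - fst (z j)\<bar> \<le> 3 / 2 ^ j" for j
      using that[of j] close(1)[of j] scale[of 3 j] by (auto simp: vertical_edge_def)
    moreover have "(\<lambda>j. \<bar>fst (y j) - fst (z j)\<bar>) \<longlonglongrightarrow> \<bar>fst a - fst b\<bar>"
      using lim by (intro tendsto_intros)
    ultimately have "\<bar>fst a - fst b\<bar> \<le> 0"
      by (rule LIMSEQ_le_dyadic[rotated])
    then show ?thesis by simp
  qed
  show "snd a = snd b" if "\<And>j. horizontal_edge (N j) K (u j) (v j)"
  proof -
    have "\<bar>snd (y j) - snd (z j)\<bar> \<le> 3 / 2 ^ j" for j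
      using that[of j] close(2)[of j] scale[of 3 j] by (auto simp: horizontal_edge_def)
    moreover have "(\<lambda>j. \<bar>snd (y j) - snd (z j)\<bar>) \<longlonglongrightarrow> \<bar>snd a - snd b\<bar>"
      using lim by (intro tendsto_intros)
    ultimately have "\<bar>snd a - snd b\<bar> \<le> 0"
      by (rule LIMSEQ_le_dyadic[rotated])
    then show ?thesis by simp
  qed
  show "a \<noteq> b" if "0 < \<delta>" "\<And>j. \<delta> \<le> norm (u j - v j)"
  proof -
    have "\<delta> - norm (y j - z j) \<le> 4 / 2 ^ j" for j
      using that(2)[of j] close(4)[of j] scale[of 4 j] by linarith
    moreover have "(\<lambda>j. \<delta> - norm (y j - z j)) \<longlonglongrightarrow> \<delta> - norm (a - b)"
      using lim by (intro tendsto_intros)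
    ultimately have "\<delta> - norm (a - b) \<le> 0"
      by (rule LIMSEQ_le_dyadic[rotated])
    with that(1) show ?thesis by auto
  qed
qed

definition vert_hor_path :: "nat \<Rightarrow> (real \<times> real) set \<Rightarrow> real \<Rightarrow> nat \<Rightarrow> (nat \<Rightarrow> real \<times> real) \<Rightarrow> bool" where
  "vert_hor_path n K \<delta> m C \<longleftrightarrow> (\<forall>i\<le>m. edge n K (C i) (C (Suc i))) \<and>
     long_vert_edge n K \<delta> (C 0) (C 1) \<and> long_hor_edge n K \<delta> (C m) (C (Suc m))"

lemma vert_hor_path_verts:
  assumes "vert_hor_path n K \<delta> m C" "i \<le> Suc m"
  shows "C i \<in> verts n K"
proof (cases "i \<le> m")
  case True
  with assms show ?thesis by (auto simp: vert_hor_path_def edge_def)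
next
  case False
  with assms have "i = Suc m" by simp
  with assms show ?thesis by (auto simp: vert_hor_path_def edge_def)
qed

lemma eventually_no_vert_hor_path:
  assumes "compact K" "no_array K" "0 < \<delta>"
  shows "\<forall>\<^sub>F n in sequentially. \<forall>C. \<not> vert_hor_path n K \<delta> m C"
proof (rule ccontr)
  assume "\<not> ?thesis"
  then have "\<forall>j. \<exists>n\<ge>j. \<exists>C. vert_hor_path n K \<delta> m C"
    by (simp add: not_eventually frequently_sequentially)
  then obtain N C where N: "\<And>j. j \<le> N j" and path: "\<And>j. vert_hor_path (N j) K \<delta> m (C j)"
    by metis
  define s where "s j i = (SOME y. y \<in> K \<inter> sq (N j) (C j i))" for j i
  have s: "s j i \<in> K \<inter> sq (N j) (C j i)" if "i \<le> Suc m" for j i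
  proof -
    have "K \<inter> sq (N j) (C j i) \<noteq> {}"
      using vert_hor_path_verts[OF path that] unfolding verts_def by blast
    then show ?thesis
      unfolding s_def by (meson ex_in_conv someI_ex)
  qed
  have "s j i \<in> K" if "i \<in> {..Suc m}" for j i
    using s that by simp
  then obtain r l where r: "strict_mono r"
    and l: "\<forall>i\<in>{..Suc m}. l i \<in> K \<and> (\<lambda>j. s (r j) i) \<longlonglongrightarrow> l i"
    using compact_common_convergent_subseq[OF assms(1) finite_atMost] by metis
  have Nr: "j \<le> N (r j)" for j
    using N[of "r j"] seq_suble[OF r, of j] by linarith
  define y where "y i j = s (r j) i" for i j
  define u where "u i j = C (r j) i" for i j
  have lim: "y i \<longlonglongrightarrow> l i" and sq: "y i j \<in> sq (N (r j)) (u i j)" if "i \<le> Suc m" for i j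
    using l s that unfolding y_def u_def by auto
  note limit = sq_pair_limit[where N = "\<lambda>j. N (r j)", OF lim lim Nr sq sq]
  have "aligned (l i) (l (Suc i))" if "i \<le> m" for i
    using path that by (intro limit(1)) (auto simp: u_def vert_hor_path_def)
  moreover have "fst (l 0) = fst (l 1)" "l 0 \<noteq> l 1"
    using path assms(3)
    by (intro limit(2,4); force simp: u_def vert_hor_path_def long_vert_edge_def)+
  moreover have "snd (l m) = snd (l (Suc m))" "l m \<noteq> l (Suc m)"
    using path assms(3)
    by (intro limit(3,4); force simp: u_def vert_hor_path_def long_hor_edge_def)+
  ultimately show False
    using no_array_no_staircase[OF assms(2), of m l] l by simp
qed

lemma edge_sym: "edge n K u v \<Longrightarrow> edge n K v u"
  unfolding edge_def by (auto simp: abs_minus_commute)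

lemma short_edge_sym: "short_edge n K \<delta> u v \<Longrightarrow> short_edge n K \<delta> v u"
  unfolding short_edge_def using edge_sym by (auto simp: norm_minus_commute)

lemma long_vert_edge_sym: "long_vert_edge n K \<delta> u v \<Longrightarrow> long_vert_edge n K \<delta> v u"
  unfolding long_vert_edge_def vertical_edge_def
  using edge_sym by (auto simp: norm_minus_commute abs_minus_commute)

lemma long_hor_edge_sym: "long_hor_edge n K \<delta> u v \<Longrightarrow> long_hor_edge n K \<delta> v u"
  unfolding long_hor_edge_def horizontal_edge_def
  using edge_sym by (auto simp: norm_minus_commute abs_minus_commute)

lemma vert_hor_path_of_short_path:
  assumes "long_vert_edge n K \<delta> w (c 0)" "\<forall>i<k. short_edge n K \<delta> (c i) (c (Suc i))"
    "long_hor_edge n K \<delta> (c k) h"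
  shows "vert_hor_path n K \<delta> (Suc k) (\<lambda>i. if i = 0 then w else if i \<le> Suc k then c (i - 1) else h)"
    (is "vert_hor_path _ _ _ _ ?C")
  unfolding vert_hor_path_def
proof (intro conjI allI impI)
  fix i assume "i \<le> Suc k"
  then consider "i = 0" | "0 < i" "i \<le> k" | "i = Suc k" by linarith
  then show "edge n K (?C i) (?C (Suc i))"
  proof cases
    case 1
    then show ?thesis using assms(1) by (auto simp: long_vert_edge_def vertical_edge_def)
  next
    case 2
    then obtain j where j: "i = Suc j" "j < k" by (cases i) auto
    with assms(2) have "short_edge n K \<delta> (c j) (c (Suc j))" by blast
    with j show ?thesis by (auto simp: short_edge_def)
  next
    case 3
    then show ?thesis using assms(3) by (auto simp: long_hor_edge_def horizontal_edge_def)
  qed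
qed (simp_all add: assms(1,3))

section \<open>Truncated graph distance and clipping\<close>

definition trunc_dist :: "'a rel \<Rightarrow> 'a set \<Rightarrow> nat \<Rightarrow> 'a \<Rightarrow> nat" where
  "trunc_dist R A L u = Min (insert L {k. k < L \<and> (\<exists>a\<in>A. (a, u) \<in> R ^^ k)})"

lemma finite_trunc_dist_set: "finite (insert L {k. k < L \<and> (\<exists>a\<in>A. (a, u) \<in> R ^^ k)})"
  by (rule finite_insert[THEN iffD2], rule finite_subset[of _ "{..<L}"]) auto

lemma trunc_dist_le: "trunc_dist R A L u \<le> L"
  unfolding trunc_dist_def using finite_trunc_dist_set by (rule Min_le) simp

lemma trunc_dist_source:
  assumes "u \<in> A"
  shows "trunc_dist R A L u = 0"
proof (cases "L = 0")
  case True
  then show ?thesis using trunc_dist_le[of R A L u] by simp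
next
  case False
  with assms have "0 \<in> {k. k < L \<and> (\<exists>a\<in>A. (a, u) \<in> R ^^ k)}" by auto
  then have "trunc_dist R A L u \<le> 0"
    unfolding trunc_dist_def using finite_trunc_dist_set by (intro Min_le) auto
  then show ?thesis by simp
qed

lemma trunc_dist_less_imp_path:
  assumes "trunc_dist R A L u < L"
  shows "\<exists>a\<in>A. (a, u) \<in> R ^^ trunc_dist R A L u"
proof -
  have "trunc_dist R A L u \<in> insert L {k. k < L \<and> (\<exists>a\<in>A. (a, u) \<in> R ^^ k)}"
    unfolding trunc_dist_def using finite_trunc_dist_set by (rule Min_in) simp
  with assms show ?thesis by auto
qed

lemma trunc_dist_step:
  assumes "(u, v) \<in> R"
  shows "trunc_dist R A L v \<le> Suc (trunc_dist R A L u)"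
proof (cases "Suc (trunc_dist R A L u) < L")
  case True
  then obtain a where "a \<in> A" "(a, u) \<in> R ^^ trunc_dist R A L u"
    using trunc_dist_less_imp_path[of R A L u] by auto
  with assms have "(a, v) \<in> R ^^ Suc (trunc_dist R A L u)"
    by (meson relpow_Suc_I)
  with True \<open>a \<in> A\<close> show ?thesis
    unfolding trunc_dist_def[of R A L v] using finite_trunc_dist_set by (intro Min_le) auto
next
  case False
  then show ?thesis using trunc_dist_le[of R A L v] by simp
qed

definition clip :: "real \<Rightarrow> real \<Rightarrow> real" where
  "clip c t = max (- c) (min t c)"

lemma abs_clip_diff_le:
  assumes "\<bar>t - s\<bar> \<le> e" "\<bar>c - d\<bar> \<le> e" "0 \<le> c" "0 \<le> d"
  shows "\<bar>clip c t - clip d s\<bar> \<le> e"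
  using assms unfolding clip_def max_def min_def by (auto split: if_splits)

lemma abs_clip_le: "0 \<le> c \<Longrightarrow> \<bar>clip c t\<bar> \<le> \<bar>t\<bar>"
  unfolding clip_def max_def min_def by auto

lemma clip_eq_self: "\<bar>t\<bar> \<le> c \<Longrightarrow> clip c t = t"
  unfolding clip_def max_def min_def by auto

lemma clip_zero [simp]: "clip 0 t = 0"
  unfolding clip_def by simp

lemma Max_image_mono:
  fixes f g :: "'a \<Rightarrow> 'b::linorder"
  assumes "finite A" "\<And>x. x \<in> A \<Longrightarrow> f x \<le> g x"
  shows "(MAX x\<in>A. f x) \<le> (MAX x\<in>A. g x)"
proof (cases "A = {}")
  case False
  have "f x \<le> (MAX x\<in>A. g x)" if "x \<in> A" for x
    using assms that by (meson Max_ge finite_imageI image_eqI order_trans)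
  with assms(1) False show ?thesis by simp
qed simp

definition short_edges :: "nat \<Rightarrow> (real \<times> real) set \<Rightarrow> real \<Rightarrow> (real \<times> real) rel" where
  "short_edges n K \<delta> = {(u, v). short_edge n K \<delta> u v}"

definition long_vert_ends :: "nat \<Rightarrow> (real \<times> real) set \<Rightarrow> real \<Rightarrow> (real \<times> real) set" where
  "long_vert_ends n K \<delta> = {u. \<exists>w. long_vert_edge n K \<delta> u w}"

lemma trunc_dist_long_hor_edge:
  assumes "\<forall>k<L. \<forall>C. \<not> vert_hor_path n K \<delta> (Suc k) C" "long_hor_edge n K \<delta> u v"
  shows "trunc_dist (short_edges n K \<delta>) (long_vert_ends n K \<delta>) L u = L"
proof (rule ccontr)
  assume "trunc_dist (short_edges n K \<delta>) (long_vert_ends n K \<delta>) L u \<noteq> L"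
  then have "trunc_dist (short_edges n K \<delta>) (long_vert_ends n K \<delta>) L u < L"
    using trunc_dist_le le_neq_implies_less by metis
  then obtain k a where "k < L" "a \<in> long_vert_ends n K \<delta>" "(a, u) \<in> short_edges n K \<delta> ^^ k"
    using trunc_dist_less_imp_path by metis
  from this(3) obtain c where c: "c 0 = a" "c k = u" "\<forall>i<k. (c i, c (Suc i)) \<in> short_edges n K \<delta>"
    unfolding relpow_fun_conv by blast
  obtain w where "long_vert_edge n K \<delta> a w"
    using \<open>a \<in> long_vert_ends n K \<delta>\<close> unfolding long_vert_ends_def by blast
  with c(1) have "long_vert_edge n K \<delta> w (c 0)"
    by (simp add: long_vert_edge_sym)
  moreover have "\<forall>i<k. short_edge n K \<delta> (c i) (c (Suc i))"
    using c(3) by (simp add: short_edges_def)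
  moreover have "long_hor_edge n K \<delta> (c k) v"
    using c(2) assms(2) by simp
  ultimately have "vert_hor_path n K \<delta> (Suc k) (\<lambda>i. if i = 0 then w else if i \<le> Suc k then c (i - 1) else v)"
    by (rule vert_hor_path_of_short_path)
  with \<open>k < L\<close> assms(1) show False by blast
qed

lemma continuous_on_compact_abs_le_nat_multiple:
  fixes f :: "'a::metric_space \<Rightarrow> real"
  assumes "compact K" "continuous_on K f" "0 < \<epsilon>"
  obtains L :: nat where "\<forall>y\<in>K. \<bar>f y\<bar> \<le> \<epsilon> * real L"
proof -
  obtain M where M: "\<forall>y\<in>K. \<bar>f y\<bar> \<le> M"
    using compact_imp_bounded[OF compact_continuous_image[OF assms(2,1)]]
    unfolding bounded_iff by auto
  obtain L :: nat where "M < real L * \<epsilon>"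
    using reals_Archimedean3[OF assms(3)] by blast
  with M have "\<forall>y\<in>K. \<bar>f y\<bar> \<le> \<epsilon> * real L"
    by (auto simp: mult.commute intro: order_trans)
  then show ?thesis by (rule that)
qed

lemma clipped_approximation:
  fixes f :: "real \<times> real \<Rightarrow> real" and x :: "real \<times> real \<Rightarrow> real \<times> real" and L :: nat
  assumes "finite (verts n K)" "0 < \<epsilon>" "4 / 2 ^ n < \<delta>"
    and x: "\<forall>u\<in>verts n K. x u \<in> K \<inter> sq n u"
    and unif: "\<forall>x1\<in>K. \<forall>x2\<in>K. norm (x1 - x2) < 2 * \<delta> \<longrightarrow> \<bar>f x1 - f x2\<bar> < \<epsilon>"
    and bound: "\<forall>y\<in>K. \<bar>f y\<bar> \<le> \<epsilon> * real L"
    and no_path: "\<forall>k<L. \<forall>C. \<not> vert_hor_path n K \<delta> (Suc k) C"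
  shows "\<exists>g. (\<forall>u1 u2. short_edge n K \<delta> u1 u2 \<longrightarrow> \<bar>g u1 - g u2\<bar> \<le> \<epsilon>) \<and>
             (\<forall>u1 u2. long_hor_edge n K \<delta> u1 u2 \<longrightarrow>
                \<bar>f (x u1) - g u1\<bar> \<le> \<epsilon> \<and> \<bar>f (x u2) - g u2\<bar> \<le> \<epsilon>) \<and>
             (\<forall>u1 u2. long_vert_edge n K \<delta> u1 u2 \<longrightarrow> g u1 = 0 \<and> g u2 = 0) \<and>
             (MAX u\<in>verts n K. \<bar>g u\<bar>) \<le> (MAX u\<in>verts n K. \<bar>f (x u)\<bar>)"
proof -
  define \<rho> where "\<rho> = trunc_dist (short_edges n K \<delta>) (long_vert_ends n K \<delta>) L"
  define g where "g u = clip (\<epsilon> * \<rho> u) (f (x u))" for u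
  have short: "\<bar>g u1 - g u2\<bar> \<le> \<epsilon>" if "short_edge n K \<delta> u1 u2" for u1 u2
  proof -
    have u: "u1 \<in> verts n K" "u2 \<in> verts n K"
      using that by (auto simp: short_edge_def edge_def)
    have "norm (x u1 - x u2) < 2 * \<delta>"
      using sq_points_close(3)[of "x u1" n u1 "x u2" u2] x u that assms(3)
      by (auto simp: short_edge_def)
    moreover have "x u1 \<in> K" "x u2 \<in> K"
      using x u by auto
    ultimately have "\<bar>f (x u1) - f (x u2)\<bar> \<le> \<epsilon>"
      using unif by (meson less_imp_le)
    moreover have "(u1, u2) \<in> short_edges n K \<delta>" "(u2, u1) \<in> short_edges n K \<delta>"
      using that short_edge_sym by (simp_all add: short_edges_def)
    then have "\<rho> u2 \<le> Suc (\<rho> u1)" "\<rho> u1 \<le> Suc (\<rho> u2)"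
      unfolding \<rho>_def by (simp_all add: trunc_dist_step)
    then have "\<bar>real (\<rho> u1) - real (\<rho> u2)\<bar> \<le> 1"
      by linarith
    then have "\<bar>\<epsilon> * \<rho> u1 - \<epsilon> * \<rho> u2\<bar> \<le> \<epsilon>"
      using assms(2) by (simp add: abs_mult mult_left_le flip: right_diff_distrib)
    ultimately show ?thesis
      unfolding g_def using assms(2) by (intro abs_clip_diff_le) auto
  qed
  have hor: "g u = f (x u)" if "long_hor_edge n K \<delta> u v" for u v
  proof -
    have "u \<in> verts n K"
      using that by (auto simp: long_hor_edge_def horizontal_edge_def edge_def)
    with x bound have "\<bar>f (x u)\<bar> \<le> \<epsilon> * \<rho> u"
      unfolding \<rho>_def trunc_dist_long_hor_edge[OF no_path that] by blast
    then show ?thesis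
      unfolding g_def by (rule clip_eq_self)
  qed
  have vert: "g u = 0" if "long_vert_edge n K \<delta> u v" for u v
  proof -
    have "u \<in> long_vert_ends n K \<delta>"
      using that unfolding long_vert_ends_def by blast
    then show ?thesis
      unfolding g_def \<rho>_def by (simp add: trunc_dist_source)
  qed
  have max: "(MAX u\<in>verts n K. \<bar>g u\<bar>) \<le> (MAX u\<in>verts n K. \<bar>f (x u)\<bar>)"
    using assms(1,2) unfolding g_def by (intro Max_image_mono abs_clip_le) auto
  show ?thesis
  proof (intro exI[of _ g] conjI allI impI)
    fix u1 u2 assume "long_hor_edge n K \<delta> u1 u2"
    then show "\<bar>f (x u1) - g u1\<bar> \<le> \<epsilon>" "\<bar>f (x u2) - g u2\<bar> \<le> \<epsilon>"
      using hor long_hor_edge_sym assms(2) by (metis abs_zero diff_self less_imp_le)+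
  next
    fix u1 u2 assume "long_vert_edge n K \<delta> u1 u2"
    then show "g u1 = 0" "g u2 = 0"
      using vert long_vert_edge_sym by metis+
  qed (use short max in auto)
qed

theorem mainTheorem5:
  fixes K :: "(real \<times> real) set" and f :: "real \<times> real \<Rightarrow> real" and \<epsilon> \<delta> :: real
  assumes "compact K" and "no_array K"
    and "continuous_on K f" and "\<epsilon> > 0" and "\<delta> > 0"
    and "\<forall>x1\<in>K. \<forall>x2\<in>K. norm (x1 - x2) < 2 * \<delta> \<longrightarrow> \<bar>f x1 - f x2\<bar> < \<epsilon>"
  shows "\<exists>n0::nat. \<forall>n\<ge>n0. \<forall>x :: real \<times> real \<Rightarrow> real \<times> real.
           (\<forall>u\<in>verts n K. x u \<in> K \<inter> sq n u) \<longrightarrow>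
           (let fn = (\<lambda>u. f (x u)) in
            \<exists>g :: real \<times> real \<Rightarrow> real.
              (\<forall>u1 u2. short_edge n K \<delta> u1 u2 \<longrightarrow> \<bar>g u1 - g u2\<bar> \<le> \<epsilon>) \<and>
              (\<forall>u1 u2. long_hor_edge n K \<delta> u1 u2 \<longrightarrow>
                   \<bar>fn u1 - g u1\<bar> \<le> \<epsilon> \<and> \<bar>fn u2 - g u2\<bar> \<le> \<epsilon>) \<and>
              (\<forall>u1 u2. long_vert_edge n K \<delta> u1 u2 \<longrightarrow> g u1 = 0 \<and> g u2 = 0) \<and>
              (MAX u\<in>verts n K. \<bar>g u\<bar>) \<le> (MAX u\<in>verts n K. \<bar>fn u\<bar>))"
proof -
  obtain L where bound: "\<forall>y\<in>K. \<bar>f y\<bar> \<le> \<epsilon> * real L"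
    using continuous_on_compact_abs_le_nat_multiple[OF assms(1,3,4)] .
  have "\<forall>\<^sub>F n in sequentially. 4 / 2 ^ n < \<delta>"
    using order_tendstoD(2)[OF LIMSEQ_divide_realpow_zero assms(5)] by simp
  moreover have "\<forall>\<^sub>F n in sequentially. \<forall>k\<in>{..<L}. \<forall>C. \<not> vert_hor_path n K \<delta> (Suc k) C"
    using eventually_no_vert_hor_path[OF assms(1,2,5)] by (simp add: eventually_ball_finite)
  ultimately have "\<forall>\<^sub>F n in sequentially. 4 / 2 ^ n < \<delta> \<and>
      (\<forall>k\<in>{..<L}. \<forall>C. \<not> vert_hor_path n K \<delta> (Suc k) C)"
    by (rule eventually_conj)
  then obtain n0 where n0: "\<And>n. n0 \<le> n \<Longrightarrow> 4 / 2 ^ n < \<delta> \<and>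
      (\<forall>k\<in>{..<L}. \<forall>C. \<not> vert_hor_path n K \<delta> (Suc k) C)"
    unfolding eventually_sequentially by blast
  have "finite (verts n K)" for n
    using finite_verts[OF compact_imp_bounded[OF assms(1)]] .
  with n0 show ?thesis
    unfolding Let_def
    by (intro exI[of _ n0] allI impI clipped_approximation[OF _ assms(4) _ _ assms(6) bound]) auto
qed

end
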